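(* Let $G$ be a po-group. The po-group $\mathbb Z \overrightarrow{\times} G$ satisfies RDP if and only if $G$ is directed and satisfies RDP.
   Context: A po-group is a (not necessarily Abelian, additively written) group with a partial order $\le$ such that $a\le b$ implies $x+a+y\le x+b+y$; $G^+$ is its positive cone; $G$ is directed if any two elements have a common upper bound. $\mathbb Z \overrightarrow{\times} G$ is the group $\mathbb Z\times G$ (componentwise operation) with the lexicographic order: $(m,g)\le(n,h)$ iff $m<n$, or $m=n$ and $g\le h$. RDP: for all $a_1,a_2,b_1,b_2$ in the positive cone with $a_1+a_2=b_1+b_2$ there are positive $c_{11},c_{12},c_{21},c_{22}$ with $a_1=c_{11}+c_{12}$, $a_2=c_{21}+c_{22}$, $b_1=c_{11}+c_{21}$, $b_2=c_{12}+c_{22}$. *)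

theory Defs
  imports Main "HOL-Library.Product_Plus"
begin

definition po_group :: "('a::group_add \<Rightarrow> 'a \<Rightarrow> bool) \<Rightarrow> bool" where
  "po_group le \<longleftrightarrow>
     (\<forall>a. le a a) \<and>
     (\<forall>a b. le a b \<and> le b a \<longrightarrow> a = b) \<and>
     (\<forall>a b c. le a b \<and> le b c \<longrightarrow> le a c) \<and>
     (\<forall>a b x y. le a b \<longrightarrow> le (x + a + y) (x + b + y))"

definition pos_cone :: "('a::group_add \<Rightarrow> 'a \<Rightarrow> bool) \<Rightarrow> 'a set" where
  "pos_cone le = {x. le 0 x}"

definition directed :: "('a \<Rightarrow> 'a \<Rightarrow> bool) \<Rightarrow> bool" where
  "directed le \<longleftrightarrow> (\<forall>a b. \<exists>c. le a c \<and> le b c)"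

definition RDP :: "('a::group_add \<Rightarrow> 'a \<Rightarrow> bool) \<Rightarrow> bool" where
  "RDP le \<longleftrightarrow>
     (\<forall>a1 a2 b1 b2. a1 \<in> pos_cone le \<and> a2 \<in> pos_cone le \<and>
        b1 \<in> pos_cone le \<and> b2 \<in> pos_cone le \<and> a1 + a2 = b1 + b2 \<longrightarrow>
        (\<exists>c11 c12 c21 c22.
           c11 \<in> pos_cone le \<and> c12 \<in> pos_cone le \<and>
           c21 \<in> pos_cone le \<and> c22 \<in> pos_cone le \<and>
           a1 = c11 + c12 \<and> a2 = c21 + c22 \<and>
           b1 = c11 + c21 \<and> b2 = c12 + c22))"

text \<open>Lexicographic order on Z x G (the group structure on int \<times> 'a is componentwise,
from Product_Plus).\<close>

definition lex_le :: "('a \<Rightarrow> 'a \<Rightarrow> bool) \<Rightarrow> int \<times> 'a \<Rightarrow> int \<times> 'a \<Rightarrow> bool" where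
  "lex_le le p q \<longleftrightarrow> fst p < fst q \<or> (fst p = fst q \<and> le (snd p) (snd q))"

end

(*
  A refinement matrix (c_ij) of a1 + a2 = b1 + b2 always has commuting
  off-diagonal entries, since c11 + c12 + c21 + c22 = c11 + c21 + c12 + c22; hence three
  entries c11, c12, c21 with a1 = c11 + c12 and b1 = c11 + c21 determine the fourth.

  If G is directed with RDP, refine a common upper bound w of g1, h1 written in two ways,
  g1 + (-g1 + w) = h1 + (-h1 + w): this yields positive c12, c21 and arbitrary (or, by
  translation, bounded below) c11 for any equation g1 + g2 = h1 + h2.  In Z x G, if the
  integer parts satisfy m1 < n1 then a1 < b1 and (a1, 0, -a1 + b1, b2) is a positive
  refinement; if m1 = n1 the integer matrix diag(m1, m2) only demands positivity in G at
  the positions where the level is 0, which the construction above provides.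

  Conversely, G embeds at level 0, giving RDP, and refining (1,g) + (1,-g) = (1,0) + (1,0)
  produces a common lower bound of g and 0, which makes G directed.
*)

theory Submission
  imports Defs
begin

lemma po_group_refl: "po_group le \<Longrightarrow> le a a"
  unfolding po_group_def by blast

lemma po_group_trans: "po_group le \<Longrightarrow> le a b \<Longrightarrow> le b c \<Longrightarrow> le a c"
  unfolding po_group_def by blast

lemma po_group_add_mono: "po_group le \<Longrightarrow> le a b \<Longrightarrow> le (x + a + y) (x + b + y)"
  unfolding po_group_def by blast

lemma po_group_add_left_mono: "po_group le \<Longrightarrow> le a b \<Longrightarrow> le (x + a) (x + b)"
  using po_group_add_mono[of le a b x 0] by simp

lemma po_group_add_right_mono: "po_group le \<Longrightarrow> le a b \<Longrightarrow> le (a + y) (b + y)"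
  using po_group_add_mono[of le a b 0 y] by simp

lemma po_group_le_iff_nonneg_left: "po_group le \<Longrightarrow> le a b \<longleftrightarrow> le 0 (- a + b)"
  using po_group_add_left_mono[of le a b "- a"] po_group_add_left_mono[of le 0 "- a + b" a]
  by (auto simp: add.assoc[symmetric])

lemma po_group_le_iff_nonneg_right: "po_group le \<Longrightarrow> le a b \<longleftrightarrow> le 0 (b - a)"
  using po_group_add_right_mono[of le a b "- a"] po_group_add_right_mono[of le 0 "b - a" a]
  by auto

lemma po_group_antisym: "po_group le \<Longrightarrow> le a b \<Longrightarrow> le b a \<Longrightarrow> a = b"
  unfolding po_group_def by blast

lemma po_group_neg_le: "po_group le \<Longrightarrow> le a b \<Longrightarrow> le (- b) (- a)"
  using po_group_add_mono[of le a b "- a" "- b"] by (simp add: add.assoc)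

definition refinement :: "'a::plus \<Rightarrow> 'a \<Rightarrow> 'a \<Rightarrow> 'a \<Rightarrow> 'a \<Rightarrow> 'a \<Rightarrow> 'a \<Rightarrow> 'a \<Rightarrow> bool" where
  "refinement a1 a2 b1 b2 c11 c12 c21 c22 \<longleftrightarrow>
     a1 = c11 + c12 \<and> a2 = c21 + c22 \<and> b1 = c11 + c21 \<and> b2 = c12 + c22"

definition refinable :: "('a::group_add \<Rightarrow> 'a \<Rightarrow> bool) \<Rightarrow> 'a \<Rightarrow> 'a \<Rightarrow> 'a \<Rightarrow> 'a \<Rightarrow> bool" where
  "refinable le a1 a2 b1 b2 \<longleftrightarrow>
     (\<exists>c11 c12 c21 c22. le 0 c11 \<and> le 0 c12 \<and> le 0 c21 \<and> le 0 c22 \<and>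
        refinement a1 a2 b1 b2 c11 c12 c21 c22)"

lemma RDP_iff_refinable:
  "RDP le \<longleftrightarrow> (\<forall>a1 a2 b1 b2. le 0 a1 \<longrightarrow> le 0 a2 \<longrightarrow> le 0 b1 \<longrightarrow> le 0 b2 \<longrightarrow>
     a1 + a2 = b1 + b2 \<longrightarrow> refinable le a1 a2 b1 b2)"
  unfolding RDP_def refinable_def refinement_def pos_cone_def by blast

lemma RDPE:
  assumes "RDP le" "le 0 a1" "le 0 a2" "le 0 b1" "le 0 b2" "a1 + a2 = b1 + b2"
  obtains c11 c12 c21 c22 where "le 0 c11" "le 0 c12" "le 0 c21" "le 0 c22"
    "refinement a1 a2 b1 b2 c11 c12 c21 c22"
  using assms unfolding RDP_iff_refinable refinable_def by blast

lemma refinable_transpose: "refinable le a1 a2 b1 b2 \<longleftrightarrow> refinable le b1 b2 a1 a2"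
  unfolding refinable_def refinement_def by blast

lemma refinement_Pair:
  "refinement (m1, g1) (m2, g2) (n1, h1) (n2, h2) (k11, x11) (k12, x12) (k21, x21) (k22, x22) \<longleftrightarrow>
     refinement m1 m2 n1 n2 k11 k12 k21 k22 \<and> refinement g1 g2 h1 h2 x11 x12 x21 x22"
  unfolding refinement_def by auto

lemma refinement_corners_commute:
  fixes c11 :: "'a::group_add"
  assumes "refinement a1 a2 b1 b2 c11 c12 c21 c22" "a1 + a2 = b1 + b2"
  shows "c12 + c21 = c21 + c12"
proof -
  have "c11 + (c12 + c21 + c22) = c11 + (c21 + c12 + c22)"
    using assms unfolding refinement_def by (simp add: add.assoc)
  then show ?thesis by simp
qed

lemma commute_imp_neg_add: "a + b = b + a \<Longrightarrow> - b + a = a - b"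
  for a b :: "'a::group_add"
  by (metis add.assoc add_minus_cancel diff_add_cancel)

lemma refinement_complete_left:
  fixes a1 :: "'a::group_add"
  assumes "a1 + a2 = b1 + b2" "a1 = c11 + c12" "b1 = c11 + c21" "c12 + c21 = c21 + c12"
  shows "refinement a1 a2 b1 b2 c11 c12 c21 (- c21 + a2)"
proof -
  have "b2 = - b1 + a1 + a2"
    using assms(1) by (metis add.assoc minus_add_cancel)
  also have "\<dots> = - c21 + c12 + a2"
    using assms(2,3) by (simp add: minus_add add.assoc diff_conv_add_uminus del: add_uminus_conv_diff)
  also have "\<dots> = c12 + (- c21 + a2)"
    using commute_imp_neg_add[OF assms(4)] by (simp add: add.assoc[symmetric])
  finally show ?thesis
    using assms(2,3) unfolding refinement_def by (simp add: add.assoc[symmetric])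
qed

lemma refinement_complete_right:
  fixes a1 :: "'a::group_add"
  assumes "a1 + a2 = b1 + b2" "a2 = c21 + c22" "b2 = c12 + c22" "c12 + c21 = c21 + c12"
  shows "refinement a1 a2 b1 b2 (a1 - c12) c12 c21 c22"
proof -
  have "b1 = a1 + a2 - b2"
    using assms(1) by simp
  also have "\<dots> = a1 + (c21 - c12)"
    using assms(2,3) by (simp add: diff_conv_add_uminus minus_add add.assoc del: add_uminus_conv_diff)
  also have "\<dots> = a1 - c12 + c21"
    using commute_imp_neg_add[OF assms(4)[symmetric]] by (metis add.assoc diff_conv_add_uminus)
  finally show ?thesis
    using assms(2,3) unfolding refinement_def by simp
qed

lemma po_group_lex_le:
  assumes "po_group le"
  shows "po_group (lex_le le)"
proof -
  have "lex_le le p p" for p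
    using po_group_refl[OF assms] by (simp add: lex_le_def)
  moreover have "p = q" if "lex_le le p q" "lex_le le q p" for p q
    using that po_group_antisym[OF assms] unfolding lex_le_def by (auto simp: prod_eq_iff)
  moreover have "lex_le le p r" if "lex_le le p q" "lex_le le q r" for p q r
    using that po_group_trans[OF assms] unfolding lex_le_def by auto
  moreover have "lex_le le (x + p + y) (x + q + y)" if "lex_le le p q" for p q x y
    using that po_group_add_mono[OF assms, of "snd p" "snd q" "snd x" "snd y"]
    unfolding lex_le_def by auto
  ultimately show ?thesis
    unfolding po_group_def by blast
qed

lemma refinable_if_le:
  assumes po: "po_group le" and "le 0 a1" "le 0 b2" "le a1 b1" "a1 + a2 = b1 + b2"
  shows "refinable le a1 a2 b1 b2"
proof -
  have "refinement a1 a2 b1 b2 a1 0 (- a1 + b1) b2"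
    using \<open>a1 + a2 = b1 + b2\<close> unfolding refinement_def
    by (metis add.assoc add.left_neutral add.right_neutral minus_add_cancel)
  moreover have "le 0 (- a1 + b1)"
    using po_group_le_iff_nonneg_left[OF po] \<open>le a1 b1\<close> by blast
  ultimately show ?thesis
    using assms po_group_refl[OF po] unfolding refinable_def by blast
qed

lemma directed_RDP_refinement_left:
  assumes po: "po_group le" and dir: "directed le" and rdp: "RDP le"
    and "le l g1" "le l h1" and sum: "g1 + g2 = h1 + h2"
  obtains x11 x12 x21 x22 where "refinement g1 g2 h1 h2 x11 x12 x21 x22"
    "le l x11" "le 0 x12" "le 0 x21"
proof -
  define a b where "a = - l + g1" and "b = - l + h1"
  have "le 0 a" "le 0 b"
    using assms po_group_le_iff_nonneg_left[OF po] unfolding a_def b_def by blast+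
  obtain w where "le a w" "le b w"
    using dir unfolding directed_def by blast
  then have "le 0 (- a + w)" "le 0 (- b + w)"
    using po_group_le_iff_nonneg_left[OF po] by blast+
  moreover have "a + (- a + w) = b + (- b + w)"
    by (simp add: add.assoc[symmetric])
  ultimately obtain c11 c12 c21 c22 where c: "le 0 c11" "le 0 c12" "le 0 c21"
    "refinement a (- a + w) b (- b + w) c11 c12 c21 c22"
    using RDPE[OF rdp \<open>le 0 a\<close> _ \<open>le 0 b\<close>] by metis
  have "c12 + c21 = c21 + c12"
    using refinement_corners_commute[OF c(4)] \<open>a + (- a + w) = b + (- b + w)\<close> .
  moreover have "g1 = (l + c11) + c12" "h1 = (l + c11) + c21"
    using c(4) unfolding refinement_def a_def b_def
    by (metis add.assoc add_minus_cancel)+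
  ultimately have "refinement g1 g2 h1 h2 (l + c11) c12 c21 (- c21 + g2)"
    using refinement_complete_left sum by blast
  moreover have "le l (l + c11)"
    using po_group_add_left_mono[OF po c(1), of l] by simp
  ultimately show thesis
    using that c(2,3) by blast
qed

lemma directed_RDP_refinement_right:
  assumes po: "po_group le" and dir: "directed le" and rdp: "RDP le"
    and "le 0 g2" "le 0 h2" and sum: "g1 + g2 = h1 + h2"
  obtains x11 x12 x21 x22 where "refinement g1 g2 h1 h2 x11 x12 x21 x22"
    "le 0 x12" "le 0 x21" "le 0 x22"
proof -
  obtain w where "le g2 w" "le h2 w"
    using dir unfolding directed_def by blast
  then have "le 0 (w - g2)" "le 0 (w - h2)"
    using po_group_le_iff_nonneg_right[OF po] by blast+
  moreover have "(w - g2) + g2 = (w - h2) + h2"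
    by simp
  ultimately obtain c11 c12 c21 c22 where c: "le 0 c12" "le 0 c21" "le 0 c22"
    "refinement (w - g2) g2 (w - h2) h2 c11 c12 c21 c22"
    using RDPE[OF rdp _ \<open>le 0 g2\<close> _ \<open>le 0 h2\<close>] by metis
  have "c12 + c21 = c21 + c12"
    using refinement_corners_commute[OF c(4)] \<open>(w - g2) + g2 = (w - h2) + h2\<close> .
  then have "refinement g1 g2 h1 h2 (g1 - c12) c12 c21 c22"
    using refinement_complete_right sum c(4) unfolding refinement_def by blast
  then show thesis
    using that c(1-3) by blast
qed

lemma directed_lower_bound:
  assumes "po_group le" "directed le"
  obtains l where "le l a" "le l b"
proof -
  obtain u where "le (- a) u" "le (- b) u"
    using assms(2) unfolding directed_def by blast
  then show thesis
    using that po_group_neg_le[OF assms(1)] by fastforce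
qed

lemma lex_le_nonneg_iff: "lex_le le 0 (k, x) \<longleftrightarrow> 0 < k \<or> k = 0 \<and> le 0 x"
  by (auto simp: lex_le_def)

lemma refinable_lex_le_same_levels:
  assumes po: "po_group le" and dir: "directed le" and rdp: "RDP le"
    and nonneg: "lex_le le 0 (m1, g1)" "lex_le le 0 (m2, g2)"
      "lex_le le 0 (m1, h1)" "lex_le le 0 (m2, h2)"
    and sum: "g1 + g2 = h1 + h2"
  shows "refinable (lex_le le) (m1, g1) (m2, g2) (m1, h1) (m2, h2)"
proof -
  obtain x11 x12 x21 x22 where x: "refinement g1 g2 h1 h2 x11 x12 x21 x22"
    "m1 = 0 \<longrightarrow> le 0 x11" "le 0 x12" "le 0 x21" "m2 = 0 \<longrightarrow> le 0 x22"
  proof (cases "m2 = 0")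
    case True
    then have "le 0 g2" "le 0 h2"
      using nonneg(2,4) by (auto simp: lex_le_nonneg_iff)
    show thesis
    proof (cases "m1 = 0")
      case True
      then have "le 0 g1" "le 0 h1"
        using nonneg(1,3) by (auto simp: lex_le_nonneg_iff)
      then show thesis
        using RDPE[OF rdp _ \<open>le 0 g2\<close> _ \<open>le 0 h2\<close> sum] that by metis
    next
      case False
      then show thesis
        using directed_RDP_refinement_right[OF po dir rdp \<open>le 0 g2\<close> \<open>le 0 h2\<close> sum] that by metis
    qed
  next
    case False
    obtain l where "le l g1" "le l h1" "m1 = 0 \<longrightarrow> l = 0"
    proof (cases "m1 = 0")
      case True
      then show thesis
        using that nonneg(1,3) by (auto simp: lex_le_nonneg_iff)
    next
      case False
      then show thesis
        using that directed_lower_bound[OF po dir] by metis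
    qed
    then show thesis
      using directed_RDP_refinement_left[OF po dir rdp \<open>le l g1\<close> \<open>le l h1\<close> sum] that False
      by metis
  qed
  have "0 \<le> m1" "0 \<le> m2"
    using nonneg(1,2) by (auto simp: lex_le_nonneg_iff)
  then have "lex_le le 0 (m1, x11)" "lex_le le 0 (0, x12)" "lex_le le 0 (0, x21)"
    "lex_le le 0 (m2, x22)"
    using x(2-5) by (auto simp: lex_le_nonneg_iff)
  moreover have "refinement (m1, g1) (m2, g2) (m1, h1) (m2, h2) (m1, x11) (0, x12) (0, x21) (m2, x22)"
    using x(1) by (simp add: refinement_Pair refinement_def)
  ultimately show ?thesis
    unfolding refinable_def by blast
qed

lemma RDP_lex_le:
  assumes po: "po_group le" and dir: "directed le" and rdp: "RDP le"
  shows "RDP (lex_le le)"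
  unfolding RDP_iff_refinable
proof (intro allI impI)
  fix a1 a2 b1 b2 :: "int \<times> 'a"
  assume nonneg: "lex_le le 0 a1" "lex_le le 0 a2" "lex_le le 0 b1" "lex_le le 0 b2"
    and sum: "a1 + a2 = b1 + b2"
  have lex_po: "po_group (lex_le le)"
    using po_group_lex_le[OF po] .
  consider "fst a1 < fst b1" | "fst b1 < fst a1" | "fst a1 = fst b1"
    by linarith
  then show "refinable (lex_le le) a1 a2 b1 b2"
  proof cases
    case 1
    then have "lex_le le a1 b1"
      by (simp add: lex_le_def)
    then show ?thesis
      using refinable_if_le[OF lex_po nonneg(1,4) _ sum] by blast
  next
    case 2
    then have "lex_le le b1 a1"
      by (simp add: lex_le_def)
    then show ?thesis
      using refinable_if_le[OF lex_po nonneg(3,2) _ sum[symmetric]] refinable_transpose by blast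
  next
    case 3
    moreover have "fst a2 = fst b2" "snd a1 + snd a2 = snd b1 + snd b2"
      using sum 3 by (metis fst_add snd_add add_left_cancel)+
    ultimately show ?thesis
      using refinable_lex_le_same_levels[OF po dir rdp, of "fst a1" "snd a1" "fst a2" "snd a2" "snd b1" "snd b2"]
        nonneg by (metis prod.collapse)
  qed
qed

lemma refinable_lex_leE:
  assumes "refinable (lex_le le) (m1, g1) (m2, g2) (n1, h1) (n2, h2)"
  obtains k11 k12 k21 k22 x11 x12 x21 x22
  where "refinement m1 m2 n1 n2 k11 k12 k21 k22" "refinement g1 g2 h1 h2 x11 x12 x21 x22"
    "lex_le le 0 (k11, x11)" "lex_le le 0 (k12, x12)"
    "lex_le le 0 (k21, x21)" "lex_le le 0 (k22, x22)"
proof -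
  obtain c11 c12 c21 c22 where c: "lex_le le 0 c11" "lex_le le 0 c12" "lex_le le 0 c21"
    "lex_le le 0 c22" "refinement (m1, g1) (m2, g2) (n1, h1) (n2, h2) c11 c12 c21 c22"
    using assms unfolding refinable_def by blast
  have "refinement (m1, g1) (m2, g2) (n1, h1) (n2, h2)
    (fst c11, snd c11) (fst c12, snd c12) (fst c21, snd c21) (fst c22, snd c22)"
    using c(5) by simp
  then show thesis
    using that[of "fst c11" "fst c12" "fst c21" "fst c22" "snd c11" "snd c12" "snd c21" "snd c22"] c(1-4)
    unfolding refinement_Pair by simp
qed

lemma RDP_lex_le_imp_RDP:
  assumes "RDP (lex_le le)"
  shows "RDP le"
  unfolding RDP_iff_refinable
proof (intro allI impI)
  fix a1 a2 b1 b2
  assume "le 0 a1" "le 0 a2" "le 0 b1" "le 0 b2" "a1 + a2 = b1 + b2"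
  then have "refinable (lex_le le) (0, a1) (0, a2) (0, b1) (0, b2)"
    using assms unfolding RDP_iff_refinable by (simp add: lex_le_nonneg_iff)
  then obtain k11 k12 k21 k22 x11 x12 x21 x22
    where k: "refinement 0 0 0 0 k11 k12 k21 k22" and x: "refinement a1 a2 b1 b2 x11 x12 x21 x22"
      and nonneg: "lex_le le 0 (k11, x11)" "lex_le le 0 (k12, x12)"
        "lex_le le 0 (k21, x21)" "lex_le le 0 (k22, x22)"
    by (rule refinable_lex_leE)
  from k nonneg have "k11 = 0" "k12 = 0" "k21 = 0" "k22 = 0"
    unfolding refinement_def lex_le_nonneg_iff by linarith+
  then show "refinable le a1 a2 b1 b2"
    using x nonneg unfolding refinable_def lex_le_nonneg_iff by auto
qed

lemma RDP_lex_le_imp_lower_bound: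
  assumes po: "po_group le" and rdp: "RDP (lex_le le)"
  obtains l where "le l 0" "le l g"
proof -
  have "refinable (lex_le le) (1, g) (1, - g) (1, 0) (1, 0)"
    using rdp unfolding RDP_iff_refinable by (simp add: lex_le_nonneg_iff)
  then obtain k11 k12 k21 k22 x11 x12 x21 x22
    where k: "refinement 1 1 1 1 k11 k12 k21 k22" and x: "refinement g (- g) 0 0 x11 x12 x21 x22"
      and nonneg: "lex_le le 0 (k11, x11)" "lex_le le 0 (k12, x12)"
        "lex_le le 0 (k21, x21)" "lex_le le 0 (k22, x22)"
    by (rule refinable_lex_leE)
  \<comment> \<open>the integer matrix (k_ij) is the antidiagonal or the diagonal 0/1 matrix\<close>
  from k nonneg consider "k11 = 0" "k22 = 0" | "k12 = 0" "k21 = 0"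
    unfolding refinement_def lex_le_nonneg_iff by linarith
  then show thesis
  proof cases
    case 1
    then have "le 0 x11" "le 0 x22"
      using nonneg by (simp_all add: lex_le_nonneg_iff)
    then have "le x12 g" "le x12 0"
      using x po_group_add_right_mono[OF po, of 0 x11 x12] po_group_add_left_mono[OF po, of 0 x22 x12]
      unfolding refinement_def by simp_all
    then show thesis
      using that by blast
  next
    case 2
    then have "le 0 x12" "le 0 x21"
      using nonneg by (simp_all add: lex_le_nonneg_iff)
    then have "le x11 g" "le x11 0"
      using x po_group_add_left_mono[OF po, of 0 _ x11] unfolding refinement_def by fastforce+
    then show thesis
      using that by blast
  qed
qed

lemma directed_if_lower_bounds:
  assumes po: "po_group le" and lower: "\<And>g. \<exists>l. le l 0 \<and> le l g"
  shows "directed le"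
  unfolding directed_def
proof (intro allI)
  fix a b
  obtain l where "le l 0" "le l (- a + b)"
    using lower by blast
  have "le (b + 0) (b + - l)"
    using po_group_add_left_mono[OF po po_group_neg_le[OF po \<open>le l 0\<close>]] by simp
  moreover have "le (a + l + - l) (a + (- a + b) + - l)"
    using po_group_add_mono[OF po \<open>le l (- a + b)\<close>, of a "- l"] by (simp add: add.assoc)
  ultimately have "le b (b - l)" "le a (b - l)"
    by (simp_all add: add.assoc[symmetric])
  then show "\<exists>c. le a c \<and> le b c"
    by blast
qed

theorem theorem3p10:
  fixes le :: "'a::group_add \<Rightarrow> 'a \<Rightarrow> bool"
  assumes "po_group le"
  shows "RDP (lex_le le) \<longleftrightarrow> directed le \<and> RDP le"
proof
  assume rdp: "RDP (lex_le le)"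
  have "directed le"
    using directed_if_lower_bounds[OF assms] RDP_lex_le_imp_lower_bound[OF assms rdp] by metis
  then show "directed le \<and> RDP le"
    using RDP_lex_le_imp_RDP[OF rdp] by blast
next
  assume "directed le \<and> RDP le"
  then show "RDP (lex_le le)"
    using RDP_lex_le[OF assms] by blast
qed

end
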